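(* Let $(A,\mathcal H)$ be a commutative Hopf algebroid and $I$ a normal Hopf ideal of $\mathcal H$. Then $\{h\in\mathcal H:\sum h_1\otimes_A q(h_2)=h\otimes_Aq(1)\}=\{h\in\mathcal H:\sum q(h_1)\otimes_Ah_2=q(1)\otimes_Ah\}$ as subalgebras of $\mathcal H$, where $q:\mathcal H\to\overline{\mathcal H}/\bar I$ is the canonical projection.
   Context: A commutative Hopf algebroid $(A,\mathcal H)$ over a field $\Bbbk$: commutative $\Bbbk$-algebras $A,\mathcal H$ with algebra maps $s,t:A\to\mathcal H$, $\varepsilon:\mathcal H\to A$, $\Delta:\mathcal H\to\mathcal H\otimes_A\mathcal H$ (left factor an $A$-module via $t$, right via $s$), $\mathcal S:\mathcal H\to\mathcal H$ such that $(\mathcal H,\Delta,\varepsilon)$ is a coassociative counital $A$-coring, $\mathcal Ss=t$, $\mathcal St=s$, $\mathcal S^2=\mathrm{id}$, $\sum\mathcal S(u_1)u_2=t\varepsilon(u)$, $\sum u_1\mathcal S(u_2)=s\varepsilon(u)$ ($\Delta(u)=\sum u_1\otimes_Au_2$). A Hopf ideal: ideal $I$ with $\varepsilon(I)=0$, $\Delta(I)\subseteq$ image of $\mathcal H\otimes_AI+I\otimes_A\mathcal H$, $\mathcal S(I)\subseteq I$. Let $\langle s-t\rangle$ be the ideal generated by all $s(a)-t(a)$, $\overline{\mathcal H}=\mathcal H/\langle s-t\rangle$ with classes $\bar x$ and $A$-algebra structure $\eta(a)=\overline{s(a)}=\overline{t(a)}$, and $\bar I=I/\langle s-t\rangle$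 when $\langle s-t\rangle\subseteq I$. $I$ is normal if $\langle s-t\rangle\subseteq I$ and for every $x\in I$, $\sum\overline{x_2}\otimes_A\mathcal S(x_1)x_3\in\overline{\mathcal H}\otimes_A\mathcal H$ lies in the image of $\bar I\otimes_A\mathcal H$. In the tensor products of the claim, $\mathcal H$ is a right $A$-module via $t$ on the left factor and a left $A$-module via $s$ on the right factor, and $\overline{\mathcal H}/\bar I$ is an $A$-module via $\eta$. *)

theory Defs
  imports Main
begin

definition is_ring_hom :: "('a::comm_ring_1 \<Rightarrow> 'b::comm_ring_1) \<Rightarrow> bool" where
  "is_ring_hom f \<longleftrightarrow> f 1 = 1 \<and> (\<forall>x y. f (x + y) = f x + f y) \<and> (\<forall>x y. f (x * y) = f x * f y)"

definition is_ideal :: "'h::comm_ring_1 set \<Rightarrow> bool" where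
  "is_ideal I \<longleftrightarrow> 0 \<in> I \<and> (\<forall>x\<in>I. \<forall>y\<in>I. x + y \<in> I) \<and> (\<forall>x\<in>I. \<forall>h. h * x \<in> I)"

definition st_ideal :: "('a \<Rightarrow> 'h::comm_ring_1) \<Rightarrow> ('a \<Rightarrow> 'h) \<Rightarrow> 'h set" where
  "st_ideal s t = {sum_list (map (\<lambda>(h, a). h * (s a - t a)) l) | l. True}"

text \<open>An element of (H/J_1) \<otimes>_A ... \<otimes>_A (H/J_n) is represented by a formal
  Z-linear combination of n-tuples (lists of length n) of representatives in H.
  Slot i is a right A-module via t and slot i+1 a left A-module via s
  (multiplication in H).\<close>

definition delta :: "'x \<Rightarrow> ('x \<Rightarrow> int)" where
  "delta v = (\<lambda>w. if w = v then 1 else 0)"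

definition fsum :: "'x list \<Rightarrow> ('x \<Rightarrow> int)" where
  "fsum xs = (\<lambda>w. int (count_list xs w))"

inductive_set tensor_rel :: "nat \<Rightarrow> 'h::comm_ring_1 set list \<Rightarrow> ('a \<Rightarrow> 'h) \<Rightarrow> ('a \<Rightarrow> 'h)
    \<Rightarrow> ('h list \<Rightarrow> int) set"
  for n :: nat and Js :: "'h set list" and s :: "'a \<Rightarrow> 'h" and t :: "'a \<Rightarrow> 'h" where
  zero: "(\<lambda>_. 0) \<in> tensor_rel n Js s t"
| diff: "f \<in> tensor_rel n Js s t \<Longrightarrow> g \<in> tensor_rel n Js s t \<Longrightarrow> (\<lambda>w. f w - g w) \<in> tensor_rel n Js s t"
| additive: "length xs = n \<Longrightarrow> i < n \<Longrightarrow>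
     (\<lambda>w. delta (xs[i := x + y]) w - delta (xs[i := x]) w - delta (xs[i := y]) w) \<in> tensor_rel n Js s t"
| balanced: "length xs = n \<Longrightarrow> Suc i < n \<Longrightarrow>
     (\<lambda>w. delta (xs[i := xs ! i * t a]) w - delta (xs[Suc i := xs ! Suc i * s a]) w) \<in> tensor_rel n Js s t"
| kill: "length xs = n \<Longrightarrow> i < n \<Longrightarrow> xs ! i \<in> Js ! i \<Longrightarrow> delta xs \<in> tensor_rel n Js s t"

definition tensor_eq :: "nat \<Rightarrow> 'h::comm_ring_1 set list \<Rightarrow> ('a \<Rightarrow> 'h) \<Rightarrow> ('a \<Rightarrow> 'h)
    \<Rightarrow> 'h list list \<Rightarrow> 'h list list \<Rightarrow> bool" where
  "tensor_eq n Js s t xs ys \<longleftrightarrow> (\<lambda>w. fsum xs w - fsum ys w) \<in> tensor_rel n Js s t"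

definition tup2 :: "('h \<times> 'h) list \<Rightarrow> 'h list list" where
  "tup2 l = map (\<lambda>(a, b). [a, b]) l"

definition eqHH :: "('a \<Rightarrow> 'h::comm_ring_1) \<Rightarrow> ('a \<Rightarrow> 'h) \<Rightarrow> ('h \<times> 'h) list \<Rightarrow> ('h \<times> 'h) list \<Rightarrow> bool" where
  "eqHH s t xs ys \<longleftrightarrow> tensor_eq 2 [{0}, {0}] s t (tup2 xs) (tup2 ys)"

definition DeltaL :: "('h \<Rightarrow> ('h \<times> 'h) list) \<Rightarrow> 'h \<Rightarrow> ('h \<times> 'h \<times> 'h) list" where
  "DeltaL Delta u = concat (map (\<lambda>(x, y). map (\<lambda>(a, b). (a, b, y)) (Delta x)) (Delta u))"

definition DeltaR :: "('h \<Rightarrow> ('h \<times> 'h) list) \<Rightarrow> 'h \<Rightarrow> ('h \<times> 'h \<times> 'h) list" where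
  "DeltaR Delta u = concat (map (\<lambda>(x, y). map (\<lambda>(a, b). (x, a, b)) (Delta y)) (Delta u))"

definition tup3 :: "('h \<times> 'h \<times> 'h) list \<Rightarrow> 'h list list" where
  "tup3 l = map (\<lambda>(a, b, c). [a, b, c]) l"

text \<open>kA, kH are the k-algebra structure maps of A and H.  Delta u is a
  (chosen) representative  sum u_1 \<otimes>_A u_2  of the comultiplication.\<close>
definition comm_hopf_algebroid ::
  "('k::field \<Rightarrow> 'a::comm_ring_1) \<Rightarrow> ('k \<Rightarrow> 'h::comm_ring_1) \<Rightarrow> ('a \<Rightarrow> 'h) \<Rightarrow> ('a \<Rightarrow> 'h)
   \<Rightarrow> ('h \<Rightarrow> 'a) \<Rightarrow> ('h \<Rightarrow> ('h \<times> 'h) list) \<Rightarrow> ('h \<Rightarrow> 'h) \<Rightarrow> bool" where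
  "comm_hopf_algebroid kA kH s t eps Delta S \<longleftrightarrow>
     is_ring_hom kA \<and> is_ring_hom kH \<and>
     is_ring_hom s \<and> is_ring_hom t \<and> is_ring_hom eps \<and> is_ring_hom S \<and>
     s \<circ> kA = kH \<and> t \<circ> kA = kH \<and> eps \<circ> kH = kA \<and> S \<circ> kH = kH \<and>
     \<comment> \<open>Delta is a k-algebra map H \<rightarrow> H \<otimes>_A H\<close>
     eqHH s t (Delta 1) [(1, 1)] \<and>
     (\<forall>u v. eqHH s t (Delta (u + v)) (Delta u @ Delta v)) \<and>
     (\<forall>u v. eqHH s t (Delta (u * v)) [(a * c, b * d). (a, b) \<leftarrow> Delta u, (c, d) \<leftarrow> Delta v]) \<and>
     (\<forall>c u. eqHH s t (Delta (kH c * u)) (map (\<lambda>(a, b). (kH c * a, b)) (Delta u))) \<and>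
     \<comment> \<open>A-coring structure: Delta and eps are A-bimodule maps\<close>
     (\<forall>a u. eqHH s t (Delta (s a * u)) (map (\<lambda>(x, y). (s a * x, y)) (Delta u))) \<and>
     (\<forall>a u. eqHH s t (Delta (t a * u)) (map (\<lambda>(x, y). (x, t a * y)) (Delta u))) \<and>
     (\<forall>a u. eps (s a * u) = a * eps u) \<and>
     (\<forall>a u. eps (t a * u) = eps u * a) \<and>
     \<comment> \<open>coassociativity\<close>
     (\<forall>u. tensor_eq 3 [{0}, {0}, {0}] s t (tup3 (DeltaL Delta u)) (tup3 (DeltaR Delta u))) \<and>
     \<comment> \<open>counitality\<close>
     (\<forall>u. sum_list (map (\<lambda>(x, y). s (eps x) * y) (Delta u)) = u) \<and>
     (\<forall>u. sum_list (map (\<lambda>(x, y). x * t (eps y)) (Delta u)) = u) \<and>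
     \<comment> \<open>antipode\<close>
     S \<circ> s = t \<and> S \<circ> t = s \<and> (\<forall>u. S (S u) = u) \<and>
     (\<forall>u. sum_list (map (\<lambda>(x, y). S x * y) (Delta u)) = t (eps u)) \<and>
     (\<forall>u. sum_list (map (\<lambda>(x, y). x * S y) (Delta u)) = s (eps u))"

definition hopf_ideal ::
  "('a \<Rightarrow> 'h::comm_ring_1) \<Rightarrow> ('a \<Rightarrow> 'h) \<Rightarrow> ('h \<Rightarrow> 'a::comm_ring_1) \<Rightarrow> ('h \<Rightarrow> ('h \<times> 'h) list)
   \<Rightarrow> ('h \<Rightarrow> 'h) \<Rightarrow> 'h set \<Rightarrow> bool" where
  "hopf_ideal s t eps Delta S I \<longleftrightarrow>
     is_ideal I \<and> (\<forall>x\<in>I. eps x = 0) \<and>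
     (\<forall>x\<in>I. \<exists>ys. (\<forall>(a, b)\<in>set ys. a \<in> I \<or> b \<in> I) \<and> eqHH s t (Delta x) ys) \<and>
     (\<forall>x\<in>I. S x \<in> I)"

text \<open>Normality: <s-t> \<subseteq> I and  sum xbar_2 \<otimes> S(x_1) x_3  lies in the image of
  Ibar \<otimes>_A H inside Hbar \<otimes>_A H, where Hbar = H/<s-t>.\<close>
definition normal_hopf_ideal ::
  "('a \<Rightarrow> 'h::comm_ring_1) \<Rightarrow> ('a \<Rightarrow> 'h) \<Rightarrow> ('h \<Rightarrow> 'a::comm_ring_1) \<Rightarrow> ('h \<Rightarrow> ('h \<times> 'h) list)
   \<Rightarrow> ('h \<Rightarrow> 'h) \<Rightarrow> 'h set \<Rightarrow> bool" where
  "normal_hopf_ideal s t eps Delta S I \<longleftrightarrow>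
     hopf_ideal s t eps Delta S I \<and> st_ideal s t \<subseteq> I \<and>
     (\<forall>x\<in>I. \<exists>ys. (\<forall>(a, b)\<in>set ys. a \<in> I) \<and>
        tensor_eq 2 [st_ideal s t, {0}] s t
          (map (\<lambda>(x1, x2, x3). [x2, S x1 * x3]) (DeltaL Delta x)) (tup2 ys))"

end

theory Submission
  imports Defs "HOL-Library.Multiset"
begin

text \<open>As \<open>\<langle>s - t\<rangle> \<subseteq> I\<close>, \<open>q\<close> is just the projection \<open>H \<rightarrow> H/I\<close>.
  If \<open>\<Sum> h\<^sub>1 \<otimes> q(h\<^sub>2) = h \<otimes> q(1)\<close>, apply \<open>a \<otimes> b \<mapsto> \<Sum> b\<^sub>2 \<otimes> a S(b\<^sub>1) b\<^sub>3\<close>, which is a well defined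
  map \<open>H \<otimes> H/I \<rightarrow> H/I \<otimes> H\<close> precisely because \<open>I\<close> is normal. It sends \<open>h \<otimes> 1\<close> to \<open>1 \<otimes> h\<close>, and
  by coassociativity it sends \<open>\<Sum> h\<^sub>1 \<otimes> h\<^sub>2\<close> to \<open>\<Sum> h\<^sub>3 \<otimes> h\<^sub>1 S(h\<^sub>2) h\<^sub>4\<close>, which the antipode and
  counit axioms (and \<open>s = t\<close> modulo \<open>I\<close>) collapse to \<open>\<Sum> q(h\<^sub>1) \<otimes> h\<^sub>2\<close>. The converse inclusion is
  symmetric, via \<open>a \<otimes> b \<mapsto> \<Sum> a\<^sub>1 S(a\<^sub>3) b \<otimes> a\<^sub>2\<close>.
  Elements of iterated tensor products are formal sums of tuples, so each such map is given on
  tuples and checked to respect additivity, \<open>A\<close>-balancing and the quotient in every slot.\<close>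

section \<open>Formal tensors\<close>

lemma tensor_rel_uminus: "f \<in> tensor_rel n Js s t \<Longrightarrow> (\<lambda>w. - f w) \<in> tensor_rel n Js s t"
  using tensor_rel.diff[OF tensor_rel.zero, of f] by simp

lemma tensor_rel_add:
  "f \<in> tensor_rel n Js s t \<Longrightarrow> g \<in> tensor_rel n Js s t \<Longrightarrow> (\<lambda>w. f w + g w) \<in> tensor_rel n Js s t"
  using tensor_rel.diff[OF _ tensor_rel_uminus, of f n Js s t g] by simp

lemma fsum_Nil [simp]: "fsum [] = (\<lambda>_. 0)"
  by (simp add: fsum_def)

lemma fsum_Cons: "fsum (x # X) = (\<lambda>w. delta x w + fsum X w)"
  by (auto simp: fsum_def delta_def)

lemma fsum_append: "fsum (X @ Y) = (\<lambda>w. fsum X w + fsum Y w)"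
  by (auto simp: fsum_def)

lemma tensor_eq_refl [simp]: "tensor_eq n Js s t X X"
  by (simp add: tensor_eq_def tensor_rel.zero)

lemma tensor_eq_sym: "tensor_eq n Js s t X Y \<Longrightarrow> tensor_eq n Js s t Y X"
  unfolding tensor_eq_def by (drule tensor_rel_uminus) simp

lemma tensor_eq_trans [trans]:
  "tensor_eq n Js s t X Y \<Longrightarrow> tensor_eq n Js s t Y Z \<Longrightarrow> tensor_eq n Js s t X Z"
  unfolding tensor_eq_def by (drule (1) tensor_rel_add) simp

lemma tensor_eq_append:
  "tensor_eq n Js s t X Y \<Longrightarrow> tensor_eq n Js s t X' Y' \<Longrightarrow> tensor_eq n Js s t (X @ X') (Y @ Y')"
  unfolding tensor_eq_def by (drule (1) tensor_rel_add) (simp add: fsum_append algebra_simps)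

lemma tensor_eq_mset: "mset X = mset Y \<Longrightarrow> tensor_eq n Js s t X Y"
  by (simp add: tensor_eq_def fsum_def tensor_rel.zero flip: count_mset)

lemma tensor_eq_concat_map:
  "(\<And>l. l \<in> set L \<Longrightarrow> tensor_eq n Js s t (f l) (g l)) \<Longrightarrow>
   tensor_eq n Js s t (concat (map f L)) (concat (map g L))"
  by (induction L) (auto intro: tensor_eq_append)

lemma tensor_eq_map:
  "(\<And>l. l \<in> set L \<Longrightarrow> tensor_eq n Js s t [f l] [g l]) \<Longrightarrow> tensor_eq n Js s t (map f L) (map g L)"
  using tensor_eq_concat_map[of L n Js s t "\<lambda>l. [f l]" "\<lambda>l. [g l]"] by (simp add: concat_map_singleton)

lemma tensor_eq_map_Nil:
  "(\<And>l. l \<in> set L \<Longrightarrow> tensor_eq n Js s t [f l] []) \<Longrightarrow> tensor_eq n Js s t (map f L) []"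
  using tensor_eq_concat_map[of L n Js s t "\<lambda>l. [f l]" "\<lambda>l. []"]
  by (simp add: concat_map_singleton map_replicate_const)

lemma tensor_eq_map_split:
  assumes "\<And>l. l \<in> set L \<Longrightarrow> tensor_eq n Js s t [h l] [f l, g l]"
  shows "tensor_eq n Js s t (map h L) (map f L @ map g L)"
proof -
  have "tensor_eq n Js s t (map h L) (concat (map (\<lambda>l. [f l, g l]) L))"
    using tensor_eq_concat_map[of L n Js s t "\<lambda>l. [h l]"] assms by (simp add: concat_map_singleton)
  also have "tensor_eq n Js s t \<dots> (map f L @ map g L)"
    by (rule tensor_eq_mset) (induction L, auto)
  finally show ?thesis .
qed

lemma tensor_eq_Nil_if_double: "tensor_eq n Js s t (X @ X) X \<Longrightarrow> tensor_eq n Js s t X []"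
  by (simp add: tensor_eq_def fsum_append)

lemma tensor_eq_additive:
  "length xs = n \<Longrightarrow> i < n \<Longrightarrow> tensor_eq n Js s t [xs[i := x + y]] [xs[i := x], xs[i := y]]"
  using tensor_rel.additive[where xs = xs and i = i and Js = Js and s = s and t = t and x = x and y = y]
  by (simp add: tensor_eq_def fsum_Cons algebra_simps)

lemma tensor_eq_balanced:
  "length xs = n \<Longrightarrow> Suc i < n \<Longrightarrow>
   tensor_eq n Js s t [xs[i := xs ! i * t a]] [xs[Suc i := xs ! Suc i * s a]]"
  using tensor_rel.balanced[where xs = xs and i = i and Js = Js and s = s and t = t and a = a]
  by (simp add: tensor_eq_def fsum_Cons)

lemma tensor_eq_kill:
  "length xs = n \<Longrightarrow> i < n \<Longrightarrow> xs ! i \<in> Js ! i \<Longrightarrow> tensor_eq n Js s t [xs] []"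
  using tensor_rel.kill[where xs = xs and i = i and Js = Js and s = s and t = t]
  by (simp add: tensor_eq_def fsum_Cons)

lemma tensor_eq_zero_entry: "length xs = n \<Longrightarrow> i < n \<Longrightarrow> tensor_eq n Js s t [xs[i := 0]] []"
  using tensor_eq_sym[OF tensor_eq_additive[of xs n i Js s t 0 0]]
  by (intro tensor_eq_Nil_if_double) simp

section \<open>Maps between tensor products\<close>

definition supp :: "('x \<Rightarrow> int) \<Rightarrow> 'x set" where
  "supp f = {v. f v \<noteq> 0}"

definition lin_ext :: "('x \<Rightarrow> 'y list) \<Rightarrow> ('x \<Rightarrow> int) \<Rightarrow> ('y \<Rightarrow> int)" where
  "lin_ext \<phi> f = (\<lambda>w. \<Sum>v\<in>supp f. f v * fsum (\<phi> v) w)"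

lemma lin_ext_eq_sum:
  "finite V \<Longrightarrow> supp f \<subseteq> V \<Longrightarrow> lin_ext \<phi> f w = (\<Sum>v\<in>V. f v * fsum (\<phi> v) w)"
  unfolding lin_ext_def by (rule sum.mono_neutral_left) (auto simp: supp_def)

lemma finite_supp_diff: "finite (supp f) \<Longrightarrow> finite (supp g) \<Longrightarrow> finite (supp (\<lambda>w. f w - g w))"
  by (rule finite_subset[of _ "supp f \<union> supp g"]) (auto simp: supp_def)

lemma supp_delta [simp]: "supp (delta v) = {v}"
  by (auto simp: supp_def delta_def)

lemma finite_supp_fsum: "finite (supp (fsum X))"
  by (rule finite_subset[of _ "set X"]) (auto simp: supp_def fsum_def count_list_0_iff)

lemma lin_ext_diff:
  assumes "finite (supp f)" "finite (supp g)"
  shows "lin_ext \<phi> (\<lambda>w. f w - g w) = (\<lambda>w. lin_ext \<phi> f w - lin_ext \<phi> g w)"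
proof
  fix w
  let ?V = "supp f \<union> supp g"
  have "supp (\<lambda>w. f w - g w) \<subseteq> ?V"
    by (auto simp: supp_def)
  then show "lin_ext \<phi> (\<lambda>w. f w - g w) w = lin_ext \<phi> f w - lin_ext \<phi> g w"
    using assms by (simp add: lin_ext_eq_sum[of ?V] left_diff_distrib sum_subtractf)
qed

lemma lin_ext_add:
  assumes "finite (supp f)" "finite (supp g)"
  shows "lin_ext \<phi> (\<lambda>w. f w + g w) = (\<lambda>w. lin_ext \<phi> f w + lin_ext \<phi> g w)"
proof
  fix w
  let ?V = "supp f \<union> supp g"
  have "supp (\<lambda>w. f w + g w) \<subseteq> ?V"
    by (auto simp: supp_def)
  then show "lin_ext \<phi> (\<lambda>w. f w + g w) w = lin_ext \<phi> f w + lin_ext \<phi> g w"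
    using assms by (simp add: lin_ext_eq_sum[of ?V] distrib_right sum.distrib)
qed

lemma lin_ext_zero [simp]: "lin_ext \<phi> (\<lambda>_. 0) = (\<lambda>_. 0)"
  by (simp add: lin_ext_def supp_def)

lemma lin_ext_delta [simp]: "lin_ext \<phi> (delta v) = fsum (\<phi> v)"
  unfolding lin_ext_def supp_delta by (simp add: delta_def)

lemma lin_ext_fsum: "lin_ext \<phi> (fsum X) = fsum (concat (map \<phi> X))"
  by (induction X) (simp_all add: fsum_Cons lin_ext_add finite_supp_fsum fsum_append)

definition induces_tensor_map ::
  "nat \<Rightarrow> 'h::comm_ring_1 set list \<Rightarrow> nat \<Rightarrow> 'h set list \<Rightarrow> ('a \<Rightarrow> 'h) \<Rightarrow> ('a \<Rightarrow> 'h)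
   \<Rightarrow> ('h list \<Rightarrow> 'h list list) \<Rightarrow> bool" where
  "induces_tensor_map n Js m Ks s t \<phi> \<longleftrightarrow>
     (\<forall>xs i x y. length xs = n \<longrightarrow> i < n \<longrightarrow>
        tensor_eq m Ks s t (\<phi> (xs[i := x + y])) (\<phi> (xs[i := x]) @ \<phi> (xs[i := y]))) \<and>
     (\<forall>xs i a. length xs = n \<longrightarrow> Suc i < n \<longrightarrow>
        tensor_eq m Ks s t (\<phi> (xs[i := xs ! i * t a])) (\<phi> (xs[Suc i := xs ! Suc i * s a]))) \<and>
     (\<forall>xs i. length xs = n \<longrightarrow> i < n \<longrightarrow> xs ! i \<in> Js ! i \<longrightarrow>
        tensor_eq m Ks s t (\<phi> xs) [])"

lemma tensor_eq_induced:
  assumes \<phi>: "induces_tensor_map n Js m Ks s t \<phi>" and "tensor_eq n Js s t X Y"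
  shows "tensor_eq m Ks s t (concat (map \<phi> X)) (concat (map \<phi> Y))"
proof -
  have "finite (supp f) \<and> lin_ext \<phi> f \<in> tensor_rel m Ks s t" if "f \<in> tensor_rel n Js s t" for f
    using that
  proof induction
    case zero
    then show ?case by (simp add: supp_def tensor_rel.zero)
  next
    case (diff f g)
    then show ?case by (simp add: lin_ext_diff finite_supp_diff tensor_rel.diff)
  next
    case (additive xs i x y)
    let ?f = "\<lambda>w. delta (xs[i := x + y]) w - delta (xs[i := x]) w - delta (xs[i := y]) w"
    have "lin_ext \<phi> ?f
      = (\<lambda>w. fsum (\<phi> (xs[i := x + y])) w - fsum (\<phi> (xs[i := x]) @ \<phi> (xs[i := y])) w)"
      by (simp add: lin_ext_diff finite_supp_diff) (simp add: fsum_append algebra_simps)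
    then show ?case
      using additive \<phi> by (simp add: induces_tensor_map_def tensor_eq_def finite_supp_diff)
  next
    case (balanced xs i a)
    then show ?case
      using \<phi> by (simp add: induces_tensor_map_def tensor_eq_def lin_ext_diff finite_supp_diff)
  next
    case (kill xs i)
    then show ?case
      using \<phi> by (simp add: induces_tensor_map_def tensor_eq_def)
  qed
  then have "lin_ext \<phi> (\<lambda>w. fsum X w - fsum Y w) \<in> tensor_rel m Ks s t"
    using assms(2) unfolding tensor_eq_def by blast
  then show ?thesis
    by (simp add: tensor_eq_def lin_ext_diff finite_supp_fsum lin_ext_fsum)
qed

lemma induces_tensor_map2I:
  assumes "\<And>b x y. tensor_eq m Ks s t (\<phi> [x + y, b]) (\<phi> [x, b] @ \<phi> [y, b])"
    and "\<And>a x y. tensor_eq m Ks s t (\<phi> [a, x + y]) (\<phi> [a, x] @ \<phi> [a, y])"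
    and "\<And>a b e. tensor_eq m Ks s t (\<phi> [a * t e, b]) (\<phi> [a, b * s e])"
    and "\<And>a b. a \<in> Js ! 0 \<Longrightarrow> tensor_eq m Ks s t (\<phi> [a, b]) []"
    and "\<And>a b. b \<in> Js ! 1 \<Longrightarrow> tensor_eq m Ks s t (\<phi> [a, b]) []"
  shows "induces_tensor_map 2 Js m Ks s t \<phi>"
  unfolding induces_tensor_map_def using assms
  by (auto simp: numeral_eq_Suc length_Suc_conv less_Suc_eq)

lemma induces_tensor_map3I:
  assumes "\<And>b c x y. tensor_eq m Ks s t (\<phi> [x + y, b, c]) (\<phi> [x, b, c] @ \<phi> [y, b, c])"
    and "\<And>a c x y. tensor_eq m Ks s t (\<phi> [a, x + y, c]) (\<phi> [a, x, c] @ \<phi> [a, y, c])"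
    and "\<And>a b x y. tensor_eq m Ks s t (\<phi> [a, b, x + y]) (\<phi> [a, b, x] @ \<phi> [a, b, y])"
    and "\<And>a b c e. tensor_eq m Ks s t (\<phi> [a * t e, b, c]) (\<phi> [a, b * s e, c])"
    and "\<And>a b c e. tensor_eq m Ks s t (\<phi> [a, b * t e, c]) (\<phi> [a, b, c * s e])"
    and "\<And>b c. tensor_eq m Ks s t (\<phi> [0, b, c]) []"
    and "\<And>a c. tensor_eq m Ks s t (\<phi> [a, 0, c]) []"
    and "\<And>a b. tensor_eq m Ks s t (\<phi> [a, b, 0]) []"
  shows "induces_tensor_map 3 [{0}, {0}, {0}] m Ks s t \<phi>"
  unfolding induces_tensor_map_def using assms
  by (auto simp: numeral_eq_Suc length_Suc_conv less_Suc_eq)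

lemma induces_tensor_map4I:
  assumes "\<And>b c d x y. tensor_eq m Ks s t (\<phi> [x + y, b, c, d]) (\<phi> [x, b, c, d] @ \<phi> [y, b, c, d])"
    and "\<And>a c d x y. tensor_eq m Ks s t (\<phi> [a, x + y, c, d]) (\<phi> [a, x, c, d] @ \<phi> [a, y, c, d])"
    and "\<And>a b d x y. tensor_eq m Ks s t (\<phi> [a, b, x + y, d]) (\<phi> [a, b, x, d] @ \<phi> [a, b, y, d])"
    and "\<And>a b c x y. tensor_eq m Ks s t (\<phi> [a, b, c, x + y]) (\<phi> [a, b, c, x] @ \<phi> [a, b, c, y])"
    and "\<And>a b c d e. tensor_eq m Ks s t (\<phi> [a * t e, b, c, d]) (\<phi> [a, b * s e, c, d])"
    and "\<And>a b c d e. tensor_eq m Ks s t (\<phi> [a, b * t e, c, d]) (\<phi> [a, b, c * s e, d])"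
    and "\<And>a b c d e. tensor_eq m Ks s t (\<phi> [a, b, c * t e, d]) (\<phi> [a, b, c, d * s e])"
    and "\<And>b c d. tensor_eq m Ks s t (\<phi> [0, b, c, d]) []"
    and "\<And>a c d. tensor_eq m Ks s t (\<phi> [a, 0, c, d]) []"
    and "\<And>a b d. tensor_eq m Ks s t (\<phi> [a, b, 0, d]) []"
    and "\<And>a b c. tensor_eq m Ks s t (\<phi> [a, b, c, 0]) []"
  shows "induces_tensor_map 4 [{0}, {0}, {0}, {0}] m Ks s t \<phi>"
  unfolding induces_tensor_map_def using assms
  by (auto simp: numeral_eq_Suc length_Suc_conv less_Suc_eq)

lemma tensor_eq_pad:
  assumes "tensor_eq n Js s t X Y" and "\<And>i. i < n \<Longrightarrow> Js ! i \<subseteq> Ks ! (length pre + i)"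
  shows "tensor_eq (length pre + n + length post) Ks s t
    (map (\<lambda>xs. pre @ xs @ post) X) (map (\<lambda>xs. pre @ xs @ post) Y)"
proof -
  have upd: "pre @ xs[i := v] @ post = (pre @ xs @ post)[length pre + i := v]"
    if "i < length xs" for xs :: "'a list" and i v
    using that by (simp add: list_update_append)
  have nth: "(pre @ xs @ post) ! (length pre + i) = xs ! i"
    if "i < length xs" for xs :: "'a list" and i
    using that by (simp add: nth_append)
  let ?n = "length pre + n + length post"
  have "induces_tensor_map n Js ?n Ks s t (\<lambda>xs. [pre @ xs @ post])"
    unfolding induces_tensor_map_def
  proof (intro conjI allI impI)
    fix xs :: "'a list" and i x y
    assume "length xs = n" "i < n"
    then show "tensor_eq ?n Ks s t
      [pre @ xs[i := x + y] @ post] ([pre @ xs[i := x] @ post] @ [pre @ xs[i := y] @ post])"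
      using tensor_eq_additive[of "pre @ xs @ post" ?n "length pre + i"] by (simp add: upd)
  next
    fix xs :: "'a list" and i a
    assume "length xs = n" "Suc i < n"
    moreover have "tensor_eq ?n Ks s t
      [(pre @ xs @ post)[length pre + i := (pre @ xs @ post) ! (length pre + i) * t a]]
      [(pre @ xs @ post)[Suc (length pre + i) := (pre @ xs @ post) ! Suc (length pre + i) * s a]]"
      using calculation by (intro tensor_eq_balanced) auto
    ultimately show "tensor_eq ?n Ks s t
      [pre @ xs[i := xs ! i * t a] @ post] [pre @ xs[Suc i := xs ! Suc i * s a] @ post]"
      using nth[of i xs] nth[of "Suc i" xs] upd[of i xs] upd[of "Suc i" xs] by simp
  next
    fix xs :: "'a list" and i
    assume "length xs = n" "i < n" "xs ! i \<in> Js ! i"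
    then show "tensor_eq ?n Ks s t [pre @ xs @ post] []"
      using assms(2) nth[of i xs] by (intro tensor_eq_kill[where i = "length pre + i"]) auto
  qed
  from tensor_eq_induced[OF this assms(1)] show ?thesis
    by (simp add: concat_map_singleton)
qed

lemma tensor_eq_pad_zeros:
  "tensor_eq n (replicate n {0}) s t X Y \<Longrightarrow>
   tensor_eq (length pre + n + length post) (replicate (length pre + n + length post) {0}) s t
     (map (\<lambda>xs. pre @ xs @ post) X) (map (\<lambda>xs. pre @ xs @ post) Y)"
  by (erule tensor_eq_pad) simp

lemma tensor_eq2_snoc:
  "tensor_eq 2 [{0}, {0}] s t X Y \<Longrightarrow>
   tensor_eq 3 [{0}, {0}, {0}] s t (map (\<lambda>l. l @ [c]) X) (map (\<lambda>l. l @ [c]) Y)"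
  using tensor_eq_pad_zeros[of 2 s t X Y "[]" "[c]"] by (simp add: numeral_eq_Suc)

lemma tensor_eq2_pad:
  "tensor_eq 2 [{0}, {0}] s t X Y \<Longrightarrow>
   tensor_eq 4 [{0}, {0}, {0}, {0}] s t (map (\<lambda>l. a # l @ [c]) X) (map (\<lambda>l. a # l @ [c]) Y)"
  using tensor_eq_pad_zeros[of 2 s t X Y "[a]" "[c]"] by (simp add: numeral_eq_Suc)

lemma tensor_eq3_snoc:
  "tensor_eq 3 [{0}, {0}, {0}] s t X Y \<Longrightarrow>
   tensor_eq 4 [{0}, {0}, {0}, {0}] s t (map (\<lambda>l. l @ [c]) X) (map (\<lambda>l. l @ [c]) Y)"
  using tensor_eq_pad_zeros[of 3 s t X Y "[]" "[c]"] by (simp add: numeral_eq_Suc)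

lemma tensor_eq3_Cons:
  "tensor_eq 3 [{0}, {0}, {0}] s t X Y \<Longrightarrow>
   tensor_eq 4 [{0}, {0}, {0}, {0}] s t (map (Cons a) X) (map (Cons a) Y)"
  using tensor_eq_pad_zeros[of 3 s t X Y "[a]" "[]"] by (simp add: numeral_eq_Suc)

lemma tensor_eq2_add_left: "u = v + w \<Longrightarrow> tensor_eq 2 Js s t [[u, y]] [[v, y], [w, y]]"
  using tensor_eq_additive[of "[0, y]" 2 0 Js s t v w] by simp

lemma tensor_eq2_add_right: "u = v + w \<Longrightarrow> tensor_eq 2 Js s t [[x, u]] [[x, v], [x, w]]"
  using tensor_eq_additive[of "[x, 0]" 2 1 Js s t v w] by simp

lemma tensor_eq2_zero_left: "tensor_eq 2 Js s t [[0, y]] []"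
  using tensor_eq_zero_entry[of "[0, y]" 2 0 Js s t] by simp

lemma tensor_eq2_zero_right: "tensor_eq 2 Js s t [[x, 0]] []"
  using tensor_eq_zero_entry[of "[x, 0]" 2 1 Js s t] by simp

lemma tensor_eq2_balanced: "tensor_eq 2 Js s t [[x * t a, y]] [[x, y * s a]]"
  using tensor_eq_balanced[of "[x, y]" 2 0 Js s t a] by simp

lemma tensor_eq2_sum_list_left: "tensor_eq 2 Js s t [[sum_list (map f L), y]] (map (\<lambda>l. [f l, y]) L)"
proof (induction L)
  case Nil
  then show ?case by (simp add: tensor_eq2_zero_left)
next
  case (Cons l L)
  have "tensor_eq 2 Js s t [[sum_list (map f (l # L)), y]] ([[f l, y]] @ [[sum_list (map f L), y]])"
    by (simp add: tensor_eq2_add_left)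
  also have "tensor_eq 2 Js s t \<dots> ([[f l, y]] @ map (\<lambda>l. [f l, y]) L)"
    using Cons.IH by (intro tensor_eq_append) auto
  finally show ?case by simp
qed

lemma tensor_eq2_sum_list_right: "tensor_eq 2 Js s t [[x, sum_list (map f L)]] (map (\<lambda>l. [x, f l]) L)"
proof (induction L)
  case Nil
  then show ?case by (simp add: tensor_eq2_zero_right)
next
  case (Cons l L)
  have "tensor_eq 2 Js s t [[x, sum_list (map f (l # L))]] ([[x, f l]] @ [[x, sum_list (map f L)]])"
    by (simp add: tensor_eq2_add_right)
  also have "tensor_eq 2 Js s t \<dots> ([[x, f l]] @ map (\<lambda>l. [x, f l]) L)"
    using Cons.IH by (intro tensor_eq_append) auto
  finally show ?case by simp
qed

lemma st_ideal_mem: "x * (t a - s a) \<in> st_ideal s t"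
proof -
  have "x * (t a - s a) = sum_list (map (\<lambda>(h, a). h * (s a - t a)) [(- x, a)])"
    by (simp add: algebra_simps)
  then show ?thesis
    unfolding st_ideal_def by blast
qed

lemma tensor_eq2_balanced_s:
  assumes "st_ideal s t \<subseteq> Js ! 0"
  shows "tensor_eq 2 Js s t [[x * s a, y]] [[x, y * s a]]"
proof -
  have "tensor_eq 2 Js s t [[x * s a, y]] ([[x * t a, y]] @ [[x * (s a - t a), y]])"
    by (simp add: tensor_eq2_add_left algebra_simps)
  also have "tensor_eq 2 Js s t \<dots> ([[x * t a, y]] @ [])"
    using assms st_ideal_mem[of "- x" t a s]
    by (intro tensor_eq_append tensor_eq_refl tensor_eq_kill[of _ 2 0]) (auto simp: algebra_simps)
  also have "tensor_eq 2 Js s t \<dots> [[x, y * s a]]"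
    by (simp add: tensor_eq2_balanced)
  finally show ?thesis .
qed

lemma tensor_eq2_balanced_t:
  assumes "st_ideal s t \<subseteq> Js ! 1"
  shows "tensor_eq 2 Js s t [[x * t a, y]] [[x, y * t a]]"
proof -
  have "tensor_eq 2 Js s t [[x * t a, y]] [[x, y * s a]]"
    by (rule tensor_eq2_balanced)
  also have "tensor_eq 2 Js s t \<dots> ([[x, y * t a]] @ [[x, y * (s a - t a)]])"
    by (simp add: tensor_eq2_add_right algebra_simps)
  also have "tensor_eq 2 Js s t \<dots> ([[x, y * t a]] @ [])"
    using assms st_ideal_mem[of "- y" t a s]
    by (intro tensor_eq_append tensor_eq_refl tensor_eq_kill[of _ 2 1]) (auto simp: algebra_simps)
  finally show ?thesis by simp
qed

lemma concat_concat: "concat (concat xsss) = concat (map concat xsss)"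
  by (induction xsss) auto

lemma tup2_alt: "tup2 L = map (\<lambda>p. [fst p, snd p]) L"
  by (simp add: tup2_def split_def)

lemma tup3_alt: "tup3 L = map (\<lambda>p. [fst p, fst (snd p), snd (snd p)]) L"
  by (simp add: tup3_def split_def)

fun mult_right :: "'h::comm_ring_1 \<Rightarrow> 'h list \<Rightarrow> 'h list list" where
  "mult_right g [a, b] = [[a, g * b]]"
| "mult_right g _ = []"

lemma induces_mult_right:
  fixes J K :: "'h::comm_ring_1 set"
  assumes "J \<subseteq> K"
  shows "induces_tensor_map 2 [J, {0}] 2 [K, {0}] s t (mult_right g)"
proof (rule induces_tensor_map2I)
  fix a b e
  show "tensor_eq 2 [K, {0}] s t (mult_right g [a * t e, b]) (mult_right g [a, b * s e])"
    using tensor_eq2_balanced[of "[K, {0}]" s t a e "g * b"] by (simp add: mult_ac)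
next
  fix a b :: 'h
  assume "a \<in> [J, {0}] ! 0"
  then show "tensor_eq 2 [K, {0}] s t (mult_right g [a, b]) []"
    using assms tensor_eq_kill[of "[a, g * b]" 2 0 "[K, {0}]" s t] by auto
qed (auto intro: tensor_eq2_add_left tensor_eq2_add_right tensor_eq2_zero_right simp: algebra_simps)

section \<open>Commutative Hopf algebroids\<close>

locale hopf_algebroid =
  fixes kA :: "'k::field \<Rightarrow> 'a::comm_ring_1" and kH :: "'k \<Rightarrow> 'h::comm_ring_1"
    and s t :: "'a \<Rightarrow> 'h" and eps :: "'h \<Rightarrow> 'a"
    and Delta :: "'h \<Rightarrow> ('h \<times> 'h) list" and S :: "'h \<Rightarrow> 'h"
  assumes hopf: "comm_hopf_algebroid kA kH s t eps Delta S"
begin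

abbreviation "eqH2 \<equiv> tensor_eq 2 [{0}, {0}] s t"
abbreviation "eqH3 \<equiv> tensor_eq 3 [{0}, {0}, {0}] s t"
abbreviation "eqH4 \<equiv> tensor_eq 4 [{0}, {0}, {0}, {0}] s t"

lemma S_add: "S (x + y) = S x + S y"
  using hopf by (simp add: comm_hopf_algebroid_def is_ring_hom_def)

lemma S_mult: "S (x * y) = S x * S y"
  using hopf by (simp add: comm_hopf_algebroid_def is_ring_hom_def)

lemma S_one: "S 1 = 1"
  using hopf by (simp add: comm_hopf_algebroid_def is_ring_hom_def)

lemma S_zero: "S 0 = 0"
  using S_add[of 0 0] by simp

lemma S_S: "S (S x) = x"
  using hopf by (simp add: comm_hopf_algebroid_def)

lemma S_s: "S (s a) = t a"
  using hopf by (simp add: comm_hopf_algebroid_def fun_eq_iff)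

lemma S_t: "S (t a) = s a"
  using hopf by (simp add: comm_hopf_algebroid_def fun_eq_iff)

lemma Delta_add: "eqH2 (tup2 (Delta (u + v))) (tup2 (Delta u) @ tup2 (Delta v))"
  using hopf by (simp add: comm_hopf_algebroid_def eqHH_def tup2_def)

lemma Delta_one: "eqH2 (tup2 (Delta 1)) [[1, 1]]"
  using hopf by (simp add: comm_hopf_algebroid_def eqHH_def tup2_def)

lemma Delta_zero: "eqH2 (tup2 (Delta 0)) []"
  using tensor_eq_sym[OF Delta_add[of 0 0]] by (intro tensor_eq_Nil_if_double) simp

lemma Delta_s_mult: "eqH2 (tup2 (Delta (s a * u))) (map (\<lambda>p. [s a * fst p, snd p]) (Delta u))"
  using hopf by (simp add: comm_hopf_algebroid_def eqHH_def tup2_def split_def comp_def)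

lemma Delta_t_mult: "eqH2 (tup2 (Delta (t a * u))) (map (\<lambda>p. [fst p, t a * snd p]) (Delta u))"
  using hopf by (simp add: comm_hopf_algebroid_def eqHH_def tup2_def split_def comp_def)

lemma coassoc: "eqH3 (tup3 (DeltaL Delta u)) (tup3 (DeltaR Delta u))"
  using hopf by (simp add: comm_hopf_algebroid_def)

lemma counit_left: "sum_list (map (\<lambda>p. s (eps (fst p)) * snd p) (Delta u)) = u"
  using hopf by (simp add: comm_hopf_algebroid_def split_def)

lemma counit_right: "sum_list (map (\<lambda>p. fst p * t (eps (snd p))) (Delta u)) = u"
  using hopf by (simp add: comm_hopf_algebroid_def split_def)

lemma antipode_left: "sum_list (map (\<lambda>p. S (fst p) * snd p) (Delta u)) = t (eps u)"
  using hopf by (simp add: comm_hopf_algebroid_def split_def)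

lemma antipode_right: "sum_list (map (\<lambda>p. fst p * S (snd p)) (Delta u)) = s (eps u)"
  using hopf by (simp add: comm_hopf_algebroid_def split_def)

fun Delta_id :: "'h list \<Rightarrow> 'h list list" where
  "Delta_id [a, b] = map (\<lambda>l. l @ [b]) (tup2 (Delta a))"
| "Delta_id _ = []"

lemma induces_Delta_id: "induces_tensor_map 2 [{0}, {0}] 3 [{0}, {0}, {0}] s t Delta_id"
proof (rule induces_tensor_map2I)
  fix b x y
  show "eqH3 (Delta_id [x + y, b]) (Delta_id [x, b] @ Delta_id [y, b])"
    using tensor_eq2_snoc[OF Delta_add[of x y], of b] by simp
next
  fix a x y
  show "eqH3 (Delta_id [a, x + y]) (Delta_id [a, x] @ Delta_id [a, y])"
    by (auto simp: tup2_alt comp_def intro!: tensor_eq_map_split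
        intro: tensor_eq_additive[of "[_, _, 0]" 3 2, simplified])
next
  fix a b e
  have "eqH3 (Delta_id [t e * a, b]) (map (\<lambda>p. [fst p, t e * snd p, b]) (Delta a))"
    using tensor_eq2_snoc[OF Delta_t_mult[of e a], of b] by (simp add: comp_def)
  also have "eqH3 \<dots> (Delta_id [a, b * s e])"
    by (auto simp: tup2_alt comp_def mult.commute intro!: tensor_eq_map
        intro: tensor_eq_balanced[of "[_, _, _]" 3 1, simplified])
  finally show "eqH3 (Delta_id [a * t e, b]) (Delta_id [a, b * s e])"
    by (simp add: mult.commute)
next
  fix a b :: 'h
  assume "a \<in> [{0::'h}, {0}] ! 0"
  then show "eqH3 (Delta_id [a, b]) []"
    using tensor_eq2_snoc[OF Delta_zero, of b] by simp
next
  fix a b :: 'h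
  assume "b \<in> [{0::'h}, {0}] ! 1"
  then show "eqH3 (Delta_id [a, b]) []"
    by (auto simp: tup2_alt comp_def intro!: tensor_eq_map_Nil
        intro: tensor_eq_zero_entry[of "[_, _, _]" 3 2, simplified])
qed

lemma DeltaL_eq_Delta_id: "tup3 (DeltaL Delta u) = concat (map Delta_id (tup2 (Delta u)))"
  by (simp add: DeltaL_def tup3_def tup2_def map_concat split_def comp_def)

lemma DeltaL_add: "eqH3 (tup3 (DeltaL Delta (u + v))) (tup3 (DeltaL Delta u) @ tup3 (DeltaL Delta v))"
  using tensor_eq_induced[OF induces_Delta_id Delta_add[of u v]] by (simp add: DeltaL_eq_Delta_id)

lemma DeltaL_one: "eqH3 (tup3 (DeltaL Delta 1)) [[1, 1, 1]]"
proof -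
  have "eqH3 (tup3 (DeltaL Delta 1)) (Delta_id [1, 1])"
    using tensor_eq_induced[OF induces_Delta_id Delta_one] by (simp add: DeltaL_eq_Delta_id)
  also have "eqH3 \<dots> [[1, 1, 1]]"
    using tensor_eq2_snoc[OF Delta_one, of 1] by simp
  finally show ?thesis .
qed

lemma DeltaL_s_mult:
  "eqH3 (tup3 (DeltaL Delta (s a * u)))
     (map (\<lambda>p. [s a * fst p, fst (snd p), snd (snd p)]) (DeltaL Delta u))"
proof -
  have "eqH3 (tup3 (DeltaL Delta (s a * u)))
      (concat (map (\<lambda>p. Delta_id [s a * fst p, snd p]) (Delta u)))"
    using tensor_eq_induced[OF induces_Delta_id Delta_s_mult[of a u]]
    by (simp add: DeltaL_eq_Delta_id comp_def)
  also have "eqH3 \<dots> (concat (map (\<lambda>p. map (\<lambda>q. [s a * fst q, snd q, snd p]) (Delta (fst p))) (Delta u)))"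
    using tensor_eq2_snoc[OF Delta_s_mult] by (intro tensor_eq_concat_map) (simp add: comp_def)
  finally show ?thesis
    by (simp add: DeltaL_def map_concat split_def comp_def)
qed

lemma DeltaL_t_mult:
  "eqH3 (tup3 (DeltaL Delta (t a * u)))
     (map (\<lambda>p. [fst p, fst (snd p), t a * snd (snd p)]) (DeltaL Delta u))"
  using tensor_eq_induced[OF induces_Delta_id Delta_t_mult[of a u]]
  by (simp add: DeltaL_eq_Delta_id DeltaL_def tup2_alt tup3_alt map_concat split_def comp_def)

fun id_Delta_id :: "'h list \<Rightarrow> 'h list list" where
  "id_Delta_id [a, b, c] = map (\<lambda>l. a # l @ [c]) (tup2 (Delta b))"
| "id_Delta_id _ = []"

lemma induces_id_Delta_id: "induces_tensor_map 3 [{0}, {0}, {0}] 4 [{0}, {0}, {0}, {0}] s t id_Delta_id"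
proof (rule induces_tensor_map3I)
  fix b c x y
  show "eqH4 (id_Delta_id [x + y, b, c]) (id_Delta_id [x, b, c] @ id_Delta_id [y, b, c])"
    by (auto simp: tup2_alt comp_def intro!: tensor_eq_map_split
        intro: tensor_eq_additive[of "[0, _, _, _]" 4 0, simplified])
next
  fix a c x y
  show "eqH4 (id_Delta_id [a, x + y, c]) (id_Delta_id [a, x, c] @ id_Delta_id [a, y, c])"
    using tensor_eq2_pad[OF Delta_add[of x y], of a c] by simp
next
  fix a b x y
  show "eqH4 (id_Delta_id [a, b, x + y]) (id_Delta_id [a, b, x] @ id_Delta_id [a, b, y])"
    by (auto simp: tup2_alt comp_def intro!: tensor_eq_map_split
        intro: tensor_eq_additive[of "[_, _, _, 0]" 4 3, simplified])
next
  fix a b c e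
  have "eqH4 (id_Delta_id [a * t e, b, c]) (map (\<lambda>p. [a, s e * fst p, snd p, c]) (Delta b))"
    by (auto simp: tup2_alt comp_def mult.commute intro!: tensor_eq_map
        intro: tensor_eq_balanced[of "[_, _, _, _]" 4 0, simplified])
  also have "eqH4 \<dots> (id_Delta_id [a, b * s e, c])"
    using tensor_eq_sym[OF tensor_eq2_pad[OF Delta_s_mult[of e b], of a c]]
    by (simp add: comp_def mult.commute)
  finally show "eqH4 (id_Delta_id [a * t e, b, c]) (id_Delta_id [a, b * s e, c])" .
next
  fix a b c e
  have "eqH4 (id_Delta_id [a, t e * b, c]) (map (\<lambda>p. [a, fst p, t e * snd p, c]) (Delta b))"
    using tensor_eq2_pad[OF Delta_t_mult[of e b], of a c] by (simp add: comp_def)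
  also have "eqH4 \<dots> (id_Delta_id [a, b, c * s e])"
    by (auto simp: tup2_alt comp_def mult.commute intro!: tensor_eq_map
        intro: tensor_eq_balanced[of "[_, _, _, _]" 4 2, simplified])
  finally show "eqH4 (id_Delta_id [a, b * t e, c]) (id_Delta_id [a, b, c * s e])"
    by (simp add: mult.commute)
next
  fix b c
  show "eqH4 (id_Delta_id [0, b, c]) []"
    by (auto simp: tup2_alt comp_def intro!: tensor_eq_map_Nil
        intro: tensor_eq_zero_entry[of "[_, _, _, _]" 4 0, simplified])
next
  fix a c
  show "eqH4 (id_Delta_id [a, 0, c]) []"
    using tensor_eq2_pad[OF Delta_zero, of a c] by simp
next
  fix a b
  show "eqH4 (id_Delta_id [a, b, 0]) []"
    by (auto simp: tup2_alt comp_def intro!: tensor_eq_map_Nil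
        intro: tensor_eq_zero_entry[of "[_, _, _, _]" 4 3, simplified])
qed

definition Delta4_LL :: "'h \<Rightarrow> 'h list list" where
  "Delta4_LL h = concat (map (\<lambda>(x, y). map (\<lambda>l. l @ [y]) (tup3 (DeltaL Delta x))) (Delta h))"

definition Delta4_LR :: "'h \<Rightarrow> 'h list list" where
  "Delta4_LR h = concat (map (\<lambda>(x, y). map (\<lambda>l. l @ [y]) (tup3 (DeltaR Delta x))) (Delta h))"

definition Delta4_RL :: "'h \<Rightarrow> 'h list list" where
  "Delta4_RL h = concat (map (\<lambda>(x, y). map (Cons x) (tup3 (DeltaL Delta y))) (Delta h))"

definition Delta4_RR :: "'h \<Rightarrow> 'h list list" where
  "Delta4_RR h = concat (map (\<lambda>(x, y). map (Cons x) (tup3 (DeltaR Delta y))) (Delta h))"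

lemma Delta4_LR_eq: "Delta4_LR h = concat (map id_Delta_id (tup3 (DeltaL Delta h)))"
  by (simp add: Delta4_LR_def DeltaL_def DeltaR_def tup3_def tup2_def map_concat concat_concat
      split_def comp_def)

lemma Delta4_RL_eq: "Delta4_RL h = concat (map id_Delta_id (tup3 (DeltaR Delta h)))"
  by (simp add: Delta4_RL_def DeltaL_def DeltaR_def tup3_def tup2_def map_concat concat_concat
      split_def comp_def)

lemma Delta4_LL_eq_RL: "eqH4 (Delta4_LL h) (Delta4_RL h)"
proof -
  have "eqH4 (Delta4_LL h) (Delta4_LR h)"
    unfolding Delta4_LL_def Delta4_LR_def split_def
    by (intro tensor_eq_concat_map tensor_eq3_snoc coassoc)
  also have "eqH4 \<dots> (Delta4_RL h)"
    unfolding Delta4_LR_eq Delta4_RL_eq by (rule tensor_eq_induced[OF induces_id_Delta_id coassoc])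
  finally show ?thesis .
qed

lemma Delta4_RL_eq_RR: "eqH4 (Delta4_RL h) (Delta4_RR h)"
  unfolding Delta4_RL_def Delta4_RR_def split_def
  by (intro tensor_eq_concat_map tensor_eq3_Cons coassoc)

fun contract_left :: "'h list \<Rightarrow> 'h list list" where
  "contract_left [a, b, c, d] = [[c, a * S b * d]]"
| "contract_left _ = []"

fun contract_right :: "'h list \<Rightarrow> 'h list list" where
  "contract_right [a, b, c, d] = [[a * S c * d, b]]"
| "contract_right _ = []"

lemma induces_contract_left:
  assumes "st_ideal s t \<subseteq> J"
  shows "induces_tensor_map 4 [{0}, {0}, {0}, {0}] 2 [J, {0}] s t contract_left"
proof (rule induces_tensor_map4I)
  fix a b c d e
  show "tensor_eq 2 [J, {0}] s t (contract_left [a, b * t e, c, d]) (contract_left [a, b, c * s e, d])"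
    using tensor_eq_sym[OF tensor_eq2_balanced_s[of s t "[J, {0}]" c e "a * S b * d"]] assms
    by (simp add: S_mult S_t mult_ac)
next
  fix a b c d e
  show "tensor_eq 2 [J, {0}] s t (contract_left [a, b, c * t e, d]) (contract_left [a, b, c, d * s e])"
    using tensor_eq2_balanced[of "[J, {0}]" s t c e "a * S b * d"] by (simp add: mult_ac)
qed (auto simp: S_add S_mult S_s S_zero algebra_simps
    intro: tensor_eq2_add_left tensor_eq2_add_right tensor_eq2_zero_left tensor_eq2_zero_right)

lemma induces_contract_right:
  assumes "st_ideal s t \<subseteq> J"
  shows "induces_tensor_map 4 [{0}, {0}, {0}, {0}] 2 [{0}, J] s t contract_right"
proof (rule induces_tensor_map4I)
  fix a b c d e
  show "tensor_eq 2 [{0}, J] s t (contract_right [a * t e, b, c, d]) (contract_right [a, b * s e, c, d])"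
    using tensor_eq2_balanced[of "[{0}, J]" s t "a * S c * d" e b] by (simp add: mult_ac)
next
  fix a b c d e
  show "tensor_eq 2 [{0}, J] s t (contract_right [a, b * t e, c, d]) (contract_right [a, b, c * s e, d])"
    using tensor_eq_sym[OF tensor_eq2_balanced_t[of s t "[{0}, J]" "a * S c * d" e b]] assms
    by (simp add: S_mult S_s mult_ac)
qed (auto simp: S_add S_mult S_t S_zero algebra_simps
    intro: tensor_eq2_add_left tensor_eq2_add_right tensor_eq2_zero_left tensor_eq2_zero_right)

lemma contract_left_Delta4_LL:
  assumes "st_ideal s t \<subseteq> J"
  shows "tensor_eq 2 [J, {0}] s t (concat (map contract_left (Delta4_LL h))) (tup2 (Delta h))"
proof -
  let ?eq = "tensor_eq 2 [J, {0}] s t"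
  have antipode: "?eq (map (\<lambda>r. [z, fst r * S (snd r) * y]) (Delta x)) [[z * s (eps x), y]]" for x y z
  proof -
    have "?eq (map (\<lambda>r. [z, fst r * S (snd r) * y]) (Delta x))
        [[z, sum_list (map (\<lambda>r. fst r * S (snd r) * y) (Delta x))]]"
      by (rule tensor_eq_sym, rule tensor_eq2_sum_list_right)
    also have "sum_list (map (\<lambda>r. fst r * S (snd r) * y) (Delta x)) = s (eps x) * y"
      using antipode_right[of x] by (simp add: sum_list_mult_const)
    also have "?eq [[z, s (eps x) * y]] [[z * s (eps x), y]]"
      using tensor_eq_sym[OF tensor_eq2_balanced_s[of s t "[J, {0}]" z "eps x" y]] assms
      by (simp add: mult.commute)
    finally show ?thesis .
  qed
  have counit: "?eq (concat (map contract_left (map (\<lambda>l. l @ [y]) (tup3 (DeltaL Delta x))))) [[x, y]]"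
    for x y
  proof -
    have "concat (map contract_left (map (\<lambda>l. l @ [y]) (tup3 (DeltaL Delta x))))
        = concat (map (\<lambda>q. map (\<lambda>r. [snd q, fst r * S (snd r) * y]) (Delta (fst q))) (Delta x))"
      by (simp add: DeltaL_def tup3_alt map_concat concat_concat comp_def split_def concat_map_singleton)
    also have "?eq \<dots> (concat (map (\<lambda>q. [[snd q * s (eps (fst q)), y]]) (Delta x)))"
      by (rule tensor_eq_concat_map) (rule antipode)
    also have "\<dots> = map (\<lambda>q. [snd q * s (eps (fst q)), y]) (Delta x)"
      by (simp add: concat_map_singleton)
    also have "?eq \<dots> [[x, y]]"
      using tensor_eq_sym[OF tensor_eq2_sum_list_left[of "[J, {0}]" s t "\<lambda>q. snd q * s (eps (fst q))" "Delta x" y]]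
        counit_left[of x] by (simp add: mult.commute)
    finally show ?thesis .
  qed
  have "concat (map contract_left (Delta4_LL h))
      = concat (map (\<lambda>p. concat (map contract_left (map (\<lambda>l. l @ [snd p]) (tup3 (DeltaL Delta (fst p))))))
          (Delta h))"
    by (simp add: Delta4_LL_def map_concat concat_concat split_def comp_def)
  also have "?eq \<dots> (concat (map (\<lambda>p. [[fst p, snd p]]) (Delta h)))"
    by (rule tensor_eq_concat_map) (rule counit)
  also have "\<dots> = tup2 (Delta h)"
    by (simp add: tup2_alt concat_map_singleton)
  finally show ?thesis .
qed

lemma contract_right_Delta4_RR:
  assumes "st_ideal s t \<subseteq> J"
  shows "tensor_eq 2 [{0}, J] s t (concat (map contract_right (Delta4_RR h))) (tup2 (Delta h))"
proof -
  let ?eq = "tensor_eq 2 [{0}, J] s t"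
  have antipode: "?eq (map (\<lambda>r. [z * S (fst r) * snd r, w]) (Delta x)) [[z, w * t (eps x)]]" for x z w
  proof -
    have "?eq (map (\<lambda>r. [z * S (fst r) * snd r, w]) (Delta x))
        [[sum_list (map (\<lambda>r. z * S (fst r) * snd r) (Delta x)), w]]"
      by (rule tensor_eq_sym, rule tensor_eq2_sum_list_left)
    also have "sum_list (map (\<lambda>r. z * S (fst r) * snd r) (Delta x)) = z * t (eps x)"
      using antipode_left[of x] by (simp add: sum_list_const_mult mult.assoc)
    also have "?eq [[z * t (eps x), w]] [[z, w * t (eps x)]]"
      using assms by (intro tensor_eq2_balanced_t) simp
    finally show ?thesis .
  qed
  have counit: "?eq (concat (map contract_right (map (Cons x) (tup3 (DeltaR Delta y))))) [[x, y]]"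
    for x y
  proof -
    have "concat (map contract_right (map (Cons x) (tup3 (DeltaR Delta y))))
        = concat (map (\<lambda>q. map (\<lambda>r. [x * S (fst r) * snd r, fst q]) (Delta (snd q))) (Delta y))"
      by (simp add: DeltaR_def tup3_alt map_concat concat_concat comp_def split_def concat_map_singleton)
    also have "?eq \<dots> (concat (map (\<lambda>q. [[x, fst q * t (eps (snd q))]]) (Delta y)))"
      by (rule tensor_eq_concat_map) (rule antipode)
    also have "\<dots> = map (\<lambda>q. [x, fst q * t (eps (snd q))]) (Delta y)"
      by (simp add: concat_map_singleton)
    also have "?eq \<dots> [[x, y]]"
      using tensor_eq_sym[OF tensor_eq2_sum_list_right[of "[{0}, J]" s t x "\<lambda>q. fst q * t (eps (snd q))" "Delta y"]]
        counit_right[of y] by simp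
    finally show ?thesis .
  qed
  have "concat (map contract_right (Delta4_RR h))
      = concat (map (\<lambda>p. concat (map contract_right (map (Cons (fst p)) (tup3 (DeltaR Delta (snd p))))))
          (Delta h))"
    by (simp add: Delta4_RR_def map_concat concat_concat split_def comp_def)
  also have "?eq \<dots> (concat (map (\<lambda>p. [[fst p, snd p]]) (Delta h)))"
    by (rule tensor_eq_concat_map) (rule counit)
  also have "\<dots> = tup2 (Delta h)"
    by (simp add: tup2_alt concat_map_singleton)
  finally show ?thesis .
qed

definition ad :: "'h \<Rightarrow> 'h list list" where
  "ad x = map (\<lambda>(x1, x2, x3). [x2, S x1 * x3]) (DeltaL Delta x)"

fun antipode_flip :: "'h \<Rightarrow> 'h list \<Rightarrow> 'h list list" where
  "antipode_flip g [a, b] = [[S b * g, a]]"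
| "antipode_flip g _ = []"

lemma induces_antipode_flip:
  assumes "st_ideal s t \<subseteq> J"
  shows "induces_tensor_map 2 [st_ideal s t, {0}] 2 [{0}, J] s t (antipode_flip g)"
proof (rule induces_tensor_map2I)
  fix a b e
  show "tensor_eq 2 [{0}, J] s t (antipode_flip g [a * t e, b]) (antipode_flip g [a, b * s e])"
    using tensor_eq_sym[OF tensor_eq2_balanced_t[of s t "[{0}, J]" "S b * g" e a]] assms
    by (simp add: S_mult S_s mult_ac)
next
  fix a b :: 'h
  assume "a \<in> [st_ideal s t, {0}] ! 0"
  then show "tensor_eq 2 [{0}, J] s t (antipode_flip g [a, b]) []"
    using assms tensor_eq_kill[of "[S b * g, a]" 2 1 "[{0}, J]" s t] by auto
qed (auto simp: S_add S_zero algebra_simps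
    intro: tensor_eq2_add_left tensor_eq2_add_right tensor_eq2_zero_left)

fun ad_left :: "'h list \<Rightarrow> 'h list list" where
  "ad_left [a, b] = concat (map contract_left (map (Cons a) (tup3 (DeltaL Delta b))))"
| "ad_left _ = []"

fun ad_right :: "'h list \<Rightarrow> 'h list list" where
  "ad_right [a, b] = concat (map contract_right (map (\<lambda>l. l @ [b]) (tup3 (DeltaL Delta a))))"
| "ad_right _ = []"

lemma ad_left_eq_mult_right: "ad_left [a, b] = concat (map (mult_right a) (ad b))"
  by (simp add: ad_def tup3_alt split_def comp_def concat_map_singleton mult_ac)

lemma ad_right_eq_antipode_flip: "ad_right [a, b] = concat (map (antipode_flip b) (ad a))"
  by (simp add: ad_def tup3_alt split_def comp_def concat_map_singleton S_mult S_S mult_ac)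

end

section \<open>Normal Hopf ideals\<close>

locale hopf_algebroid_normal_ideal = hopf_algebroid +
  fixes I
  assumes normal: "normal_hopf_ideal s t eps Delta S I"
begin

abbreviation "eqHI \<equiv> tensor_eq 2 [{0}, I] s t"
abbreviation "eqIH \<equiv> tensor_eq 2 [I, {0}] s t"

lemma st_ideal_subset: "st_ideal s t \<subseteq> I"
  using normal by (simp add: normal_hopf_ideal_def)

lemma ad_vanishes_on_ideal:
  assumes "x \<in> I"
    and \<phi>: "induces_tensor_map 2 [st_ideal s t, {0}] m Ks s t \<phi>"
    and kill: "\<And>a b. a \<in> I \<Longrightarrow> tensor_eq m Ks s t (\<phi> [a, b]) []"
  shows "tensor_eq m Ks s t (concat (map \<phi> (ad x))) []"
proof -
  obtain ys where ys: "\<forall>(a, b) \<in> set ys. a \<in> I" "tensor_eq 2 [st_ideal s t, {0}] s t (ad x) (tup2 ys)"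
    using normal assms(1) by (auto simp: normal_hopf_ideal_def ad_def)
  have "tensor_eq m Ks s t (concat (map \<phi> (ad x))) (concat (map \<phi> (tup2 ys)))"
    by (rule tensor_eq_induced[OF \<phi> ys(2)])
  also have "tensor_eq m Ks s t \<dots> (concat (map (\<lambda>_. []) (tup2 ys)))"
    using ys(1) kill by (intro tensor_eq_concat_map) (auto simp: tup2_def)
  finally show ?thesis
    by (simp add: map_replicate_const)
qed

lemma induces_ad_left: "induces_tensor_map 2 [{0}, I] 2 [I, {0}] s t ad_left"
proof (rule induces_tensor_map2I)
  fix a x y
  show "eqIH (ad_left [a, x + y]) (ad_left [a, x] @ ad_left [a, y])"
    using tensor_eq_induced[OF induces_contract_left[OF st_ideal_subset] tensor_eq3_Cons[OF DeltaL_add]]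
    by simp
next
  fix a b e
  have "eqIH (ad_left [a, s e * b])
      (concat (map contract_left (map (Cons a)
        (map (\<lambda>p. [s e * fst p, fst (snd p), snd (snd p)]) (DeltaL Delta b)))))"
    using tensor_eq_induced[OF induces_contract_left[OF st_ideal_subset] tensor_eq3_Cons[OF DeltaL_s_mult]]
    by simp
  from tensor_eq_sym[OF this] show "eqIH (ad_left [a * t e, b]) (ad_left [a, b * s e])"
    by (simp add: tup3_alt comp_def S_mult S_s mult_ac)
next
  fix a b
  assume "b \<in> [{0}, I] ! 1"
  then show "eqIH (ad_left [a, b]) []"
    unfolding ad_left_eq_mult_right
    using induces_mult_right[OF st_ideal_subset] tensor_eq_kill[of "[_, _]" 2 0 "[I, {0}]" s t]
    by (intro ad_vanishes_on_ideal) auto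
qed (auto simp: tup3_alt comp_def algebra_simps intro!: tensor_eq_map_split tensor_eq_map_Nil
    intro: tensor_eq2_add_right tensor_eq2_zero_right)

lemma induces_ad_right: "induces_tensor_map 2 [I, {0}] 2 [{0}, I] s t ad_right"
proof (rule induces_tensor_map2I)
  fix b x y
  show "eqHI (ad_right [x + y, b]) (ad_right [x, b] @ ad_right [y, b])"
    using tensor_eq_induced[OF induces_contract_right[OF st_ideal_subset] tensor_eq3_snoc[OF DeltaL_add]]
    by simp
next
  fix a b e
  have "eqHI (ad_right [t e * a, b])
      (concat (map contract_right (map (\<lambda>l. l @ [b])
        (map (\<lambda>p. [fst p, fst (snd p), t e * snd (snd p)]) (DeltaL Delta a)))))"
    using tensor_eq_induced[OF induces_contract_right[OF st_ideal_subset] tensor_eq3_snoc[OF DeltaL_t_mult]]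
    by simp
  then show "eqHI (ad_right [a * t e, b]) (ad_right [a, b * s e])"
    by (simp add: tup3_alt comp_def S_mult S_t mult_ac)
next
  fix a b
  assume "a \<in> [I, {0}] ! 0"
  then show "eqHI (ad_right [a, b]) []"
    unfolding ad_right_eq_antipode_flip
    using induces_antipode_flip[OF st_ideal_subset] tensor_eq_kill[of "[_, _]" 2 1 "[{0}, I]" s t]
    by (intro ad_vanishes_on_ideal) auto
qed (auto simp: tup3_alt comp_def algebra_simps intro!: tensor_eq_map_split tensor_eq_map_Nil
    intro: tensor_eq2_add_left tensor_eq2_zero_left)

lemma ad_left_unit: "eqIH (ad_left [h, 1]) [[1, h]]"
  using tensor_eq_induced[OF induces_contract_left[OF st_ideal_subset] tensor_eq3_Cons[OF DeltaL_one]]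
  by (simp add: S_one)

lemma ad_right_unit: "eqHI (ad_right [1, h]) [[h, 1]]"
  using tensor_eq_induced[OF induces_contract_right[OF st_ideal_subset] tensor_eq3_snoc[OF DeltaL_one]]
  by (simp add: S_one)

lemma right_coinvariant_imp_left_coinvariant:
  assumes "eqHI (tup2 (Delta h)) [[h, 1]]"
  shows "eqIH (tup2 (Delta h)) [[1, h]]"
proof -
  have "eqIH (tup2 (Delta h)) (concat (map contract_left (Delta4_LL h)))"
    by (rule tensor_eq_sym, rule contract_left_Delta4_LL[OF st_ideal_subset])
  also have "eqIH \<dots> (concat (map contract_left (Delta4_RL h)))"
    by (rule tensor_eq_induced[OF induces_contract_left[OF st_ideal_subset] Delta4_LL_eq_RL])
  also have "\<dots> = concat (map ad_left (tup2 (Delta h)))"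
    by (simp add: Delta4_RL_def tup2_alt map_concat concat_concat split_def comp_def)
  also have "eqIH \<dots> (ad_left [h, 1])"
    using tensor_eq_induced[OF induces_ad_left assms] by simp
  also have "eqIH \<dots> [[1, h]]"
    by (rule ad_left_unit)
  finally show ?thesis .
qed

lemma left_coinvariant_imp_right_coinvariant:
  assumes "eqIH (tup2 (Delta h)) [[1, h]]"
  shows "eqHI (tup2 (Delta h)) [[h, 1]]"
proof -
  have "eqHI (tup2 (Delta h)) (concat (map contract_right (Delta4_RR h)))"
    by (rule tensor_eq_sym, rule contract_right_Delta4_RR[OF st_ideal_subset])
  also have "eqHI \<dots> (concat (map contract_right (Delta4_RL h)))"
    by (rule tensor_eq_induced[OF induces_contract_right[OF st_ideal_subset] tensor_eq_sym[OF Delta4_RL_eq_RR]])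
  also have "eqHI \<dots> (concat (map contract_right (Delta4_LL h)))"
    by (rule tensor_eq_induced[OF induces_contract_right[OF st_ideal_subset] tensor_eq_sym[OF Delta4_LL_eq_RL]])
  also have "\<dots> = concat (map ad_right (tup2 (Delta h)))"
    by (simp add: Delta4_LL_def tup2_alt map_concat concat_concat split_def comp_def)
  also have "eqHI \<dots> (ad_right [1, h])"
    using tensor_eq_induced[OF induces_ad_right assms] by simp
  also have "eqHI \<dots> [[h, 1]]"
    by (rule ad_right_unit)
  finally show ?thesis .
qed

end

theorem lemma3p23:
  fixes kA :: "'k::field \<Rightarrow> 'a::comm_ring_1" and kH :: "'k \<Rightarrow> 'h::comm_ring_1"
    and s t :: "'a \<Rightarrow> 'h" and eps :: "'h \<Rightarrow> 'a"
    and Delta :: "'h \<Rightarrow> ('h \<times> 'h) list" and S :: "'h \<Rightarrow> 'h" and I :: "'h set"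
  assumes "comm_hopf_algebroid kA kH s t eps Delta S"
    and "normal_hopf_ideal s t eps Delta S I"
  shows "{h. tensor_eq 2 [{0}, I] s t (tup2 (Delta h)) [[h, 1]]}
       = {h. tensor_eq 2 [I, {0}] s t (tup2 (Delta h)) [[1, h]]}"
proof -
  interpret hopf_algebroid_normal_ideal kA kH s t eps Delta S I
    using assms by unfold_locales
  show ?thesis
    using right_coinvariant_imp_left_coinvariant left_coinvariant_imp_right_coinvariant by blast
qed

end
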